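(* Let $d\geq 2$ and let $\mathcal{H}_1,\mathcal{H}_2,\mathcal{H}_3,\mathcal{H}_4$ each be $\mathbb{C}^d$, with Alice holding $\mathcal{H}_A=\mathcal{H}_1\otimes\mathcal{H}_3$ and Bob holding $\mathcal{H}_B=\mathcal{H}_2\otimes\mathcal{H}_4$. For real $\epsilon,\delta$ let $$\rho=\mathbb{1}_{12}\otimes\mathbb{1}_{34}+\frac{\epsilon d-1}{d}\left(\mathbb{1}_{12}\otimes F_{34}+F_{12}\otimes\mathbb{1}_{34}\right)+\frac{1-2\epsilon d+\delta d^2}{d^2}F_{12}\otimes F_{34},$$ and assume $\rho$ is positive semidefinite. If either $$\Bigl(1-\frac{2}{d}\Bigr)^2+\min(4\epsilon,0)+\min(2\delta,0)\geq 0$$ or $$d^2+\min\bigl(4d(\epsilon d-1),0\bigr)+\min\bigl(2(\delta d^2-1),0\bigr)\geq 0,$$ then $\rho$ is 1-undistillable, i.e. $\langle\psi|\rho^{T_B}|\psi\rangle\geq 0$ for every vector $|\psi\rangle\in\mathcal{H}_A\otimes\mathcal{H}_B$ of Schmidt rank at most $2$ with respect to the split $A|B$.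
   Context: $F_{ij}$ denotes the swap operator $\sum_{k,l}|kl\rangle\langle lk|$ exchanging $\mathcal{H}_i$ and $\mathcal{H}_j$, and $\mathbb{1}_{ij}$ the identity on $\mathcal{H}_i\otimes\mathcal{H}_j$. $\rho^{T_B}$ denotes the partial transpose with respect to Bob's system $\mathcal{H}_2\otimes\mathcal{H}_4$ in the computational basis. *)

theory Defs
  imports Complex_Main "HOL-Library.Complex_Order"
begin

text \<open>A basis vector of
  H1 (x) H2 (x) H3 (x) H4 is indexed by a tuple (i1,i2,i3,i4).
  Vectors are functions on index tuples (only values on the index set matter),
  operators are matrices indexed by pairs of index tuples.\<close>

type_synonym idx4 = "nat \<times> nat \<times> nat \<times> nat"
type_synonym vec4 = "idx4 \<Rightarrow> complex"
type_synonym op4 = "idx4 \<Rightarrow> idx4 \<Rightarrow> complex"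
type_synonym op2 = "nat \<times> nat \<Rightarrow> nat \<times> nat \<Rightarrow> complex"

definition Idx :: "nat \<Rightarrow> idx4 set" where
  "Idx d = {..<d} \<times> {..<d} \<times> {..<d} \<times> {..<d}"

definition kd :: "nat \<Rightarrow> nat \<Rightarrow> complex" where
  "kd a b = (if a = b then 1 else 0)"

definition id2 :: op2 where
  "id2 = (\<lambda>(i,j) (k,l). kd i k * kd j l)"

definition swap2 :: op2 where
  "swap2 = (\<lambda>(i,j) (k,l). kd i l * kd j k)"

definition tens :: "op2 \<Rightarrow> op2 \<Rightarrow> op4" where
  "tens A B = (\<lambda>(x1,x2,x3,x4) (y1,y2,y3,y4). A (x1,x2) (y1,y2) * B (x3,x4) (y3,y4))"

definition rho :: "nat \<Rightarrow> real \<Rightarrow> real \<Rightarrow> op4" where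
  "rho d \<epsilon> \<delta> = (\<lambda>x y.
      tens id2 id2 x y
    + complex_of_real ((\<epsilon> * real d - 1) / real d) * (tens id2 swap2 x y + tens swap2 id2 x y)
    + complex_of_real ((1 - 2 * \<epsilon> * real d + \<delta> * (real d)^2) / (real d)^2) * tens swap2 swap2 x y)"

definition qform :: "nat \<Rightarrow> op4 \<Rightarrow> vec4 \<Rightarrow> complex" where
  "qform d M \<psi> = (\<Sum>x\<in>Idx d. \<Sum>y\<in>Idx d. cnj (\<psi> x) * M x y * \<psi> y)"

text \<open>Positive semidefinite: <psi|M|psi> is real and nonnegative for all psi
  (complex order from HOL-Library.Complex_Order).\<close>
definition psd :: "nat \<Rightarrow> op4 \<Rightarrow> bool" where
  "psd d M = (\<forall>\<psi>. 0 \<le> qform d M \<psi>)"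

definition ptB :: "op4 \<Rightarrow> op4" where
  "ptB M = (\<lambda>(x1,x2,x3,x4) (y1,y2,y3,y4). M (x1,y2,x3,y4) (y1,x2,y3,x4))"

definition schmidt_rank :: "nat \<Rightarrow> vec4 \<Rightarrow> nat" where
  "schmidt_rank d \<psi> = (LEAST r. \<exists>a b :: nat \<Rightarrow> nat \<times> nat \<Rightarrow> complex.
      \<forall>(x1,x2,x3,x4)\<in>Idx d. \<psi> (x1,x2,x3,x4) = (\<Sum>k<r. a k (x1,x3) * b k (x2,x4)))"

definition one_undistillable :: "nat \<Rightarrow> op4 \<Rightarrow> bool" where
  "one_undistillable d M = (\<forall>\<psi>. schmidt_rank d \<psi> \<le> 2 \<longrightarrow> 0 \<le> qform d (ptB M) \<psi>)"

end

theory Submission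
  imports Defs "HOL-Analysis.Convex"
begin

text \<open>
  Put \<open>\<Phi> = \<Sum>\<^sub>k |kk\<rangle>\<close>. The partial transpose of the swap is \<open>|\<Phi>\<rangle>\<langle>\<Phi>|\<close>, so for any
  \<open>\<psi>\<close> the value \<open>\<langle>\<psi>|\<rho>\<^sup>T\<^sup>B|\<psi>\<rangle>\<close> equals \<open>S + a (N\<^sub>1\<^sub>2 + N\<^sub>3\<^sub>4) + c |T|\<^sup>2\<close> with
  \<open>a = (\<epsilon> d - 1) / d\<close>, \<open>c = (1 - 2 \<epsilon> d + \<delta> d\<^sup>2) / d\<^sup>2\<close>, where \<open>S = \<parallel>\<psi>\<parallel>\<^sup>2\<close>, \<open>N\<^sub>1\<^sub>2\<close> and \<open>N\<^sub>3\<^sub>4\<close>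
  are the squared norms of \<open>\<psi>\<close> contracted with \<open>\<Phi>\<close> on \<open>H\<^sub>1 \<otimes> H\<^sub>2\<close> resp. \<open>H\<^sub>3 \<otimes> H\<^sub>4\<close>, and
  \<open>T = \<langle>\<Phi> \<otimes> \<Phi>|\<psi>\<rangle>\<close>.

  A matrix \<open>Z\<close> of rank at most two satisfies \<open>|tr Z|\<^sup>2 \<le> 2 \<parallel>Z\<parallel>\<^sup>2\<close>. If \<open>\<psi>\<close> has Schmidt rank at
  most two, so have its slices and its contractions with product vectors; this gives
  \<open>N\<^sub>1\<^sub>2, N\<^sub>3\<^sub>4, |T|\<^sup>2 \<le> 2 S\<close>, and Cauchy--Schwarz gives \<open>|T|\<^sup>2 \<le> d N\<^sub>1\<^sub>2, d N\<^sub>3\<^sub>4\<close>. The remaining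
  constraint \<open>d N\<^sub>3\<^sub>4 + 2 N\<^sub>1\<^sub>2 \<le> 2 d S + |T|\<^sup>2\<close> comes from the form
  \<open>g Z = \<parallel>Z\<parallel>\<^sup>2 - |tr Z|\<^sup>2 / 2\<close>, which is nonnegative on matrices of rank at most two:
  Lagrange's identity for \<open>g\<close> over the diagonal slices \<open>\<psi>\<^sub>i\<^sub>i\<close> of \<open>\<psi>\<close> involves the differences
  \<open>g (\<psi>\<^sub>i\<^sub>i - \<psi>\<^sub>j\<^sub>j)\<close>, and polarization bounds these below by \<open>- g \<psi>\<^sub>i\<^sub>j - g \<psi>\<^sub>j\<^sub>i\<close>.
  Each of the two hypotheses on \<open>\<epsilon>, \<delta>\<close> makes these linear constraints force the value to be
  nonnegative.
\<close>

section \<open>Matrices of rank at most two\<close>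

type_synonym 'a mat = "'a \<Rightarrow> 'a \<Rightarrow> complex"

definition frob_sq :: "'a set \<Rightarrow> 'a mat \<Rightarrow> real" where
  "frob_sq I Z = (\<Sum>x\<in>I. \<Sum>y\<in>I. (cmod (Z x y))\<^sup>2)"

definition mtrace :: "'a set \<Rightarrow> 'a mat \<Rightarrow> complex" where
  "mtrace I Z = (\<Sum>l\<in>I. Z l l)"

definition rank_le_2 :: "'a mat \<Rightarrow> bool" where
  "rank_le_2 Z \<longleftrightarrow> (\<exists>p q r s. \<forall>x y. Z x y = p x * q y + r x * s y)"

definition trace_gap :: "'a set \<Rightarrow> 'a mat \<Rightarrow> real" where
  "trace_gap I Z = frob_sq I Z - (cmod (mtrace I Z))\<^sup>2 / 2"

lemma of_real_cmod_sq: "(complex_of_real (cmod z))\<^sup>2 = cnj z * z"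
  by (simp add: complex_norm_square mult.commute flip: of_real_power)

lemma sum_swap3:
  "(\<Sum>i\<in>A. \<Sum>x\<in>B. \<Sum>y\<in>C. f i x y) = (\<Sum>x\<in>B. \<Sum>y\<in>C. \<Sum>i\<in>A. f i x y)"
  by (subst sum.swap) (rule sum.cong[OF refl], rule sum.swap)

lemma sum_swap_pairs:
  "(\<Sum>i\<in>A. \<Sum>j\<in>B. \<Sum>x\<in>C. \<Sum>y\<in>D. f i j x y) = (\<Sum>x\<in>C. \<Sum>y\<in>D. \<Sum>i\<in>A. \<Sum>j\<in>B. f i j x y)"
proof -
  have "(\<Sum>i\<in>A. \<Sum>j\<in>B. \<Sum>x\<in>C. \<Sum>y\<in>D. f i j x y) = (\<Sum>i\<in>A. \<Sum>x\<in>C. \<Sum>y\<in>D. \<Sum>j\<in>B. f i j x y)"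
    by (intro sum.cong refl sum_swap3)
  also have "\<dots> = (\<Sum>x\<in>C. \<Sum>y\<in>D. \<Sum>i\<in>A. \<Sum>j\<in>B. f i j x y)"
    by (rule sum_swap3)
  finally show ?thesis .
qed

lemma cmod_add_sq_le: "(cmod (a + b))\<^sup>2 \<le> 2 * (cmod a)\<^sup>2 + 2 * (cmod b)\<^sup>2"
proof -
  have "(cmod (a + b))\<^sup>2 \<le> (cmod a + cmod b)\<^sup>2"
    by (simp add: norm_triangle_ineq power_mono)
  also have "\<dots> \<le> 2 * (cmod a)\<^sup>2 + 2 * (cmod b)\<^sup>2"
    using sum_squares_bound[of "cmod a" "cmod b"] by (simp add: power2_sum)
  finally show ?thesis .
qed

lemma cmod_sum_mult_sq_le:
  "(cmod (\<Sum>i\<in>I. f i * g i))\<^sup>2 \<le> (\<Sum>i\<in>I. (cmod (f i))\<^sup>2) * (\<Sum>i\<in>I. (cmod (g i))\<^sup>2)"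
proof -
  have "(cmod (\<Sum>i\<in>I. f i * g i))\<^sup>2 \<le> (\<Sum>i\<in>I. cmod (f i) * cmod (g i))\<^sup>2"
    using norm_sum[of "\<lambda>i. f i * g i" I] by (simp add: norm_mult power_mono)
  also have "\<dots> \<le> (\<Sum>i\<in>I. (cmod (f i))\<^sup>2) * (\<Sum>i\<in>I. (cmod (g i))\<^sup>2)"
    by (rule Cauchy_Schwarz_ineq_sum)
  finally show ?thesis .
qed

lemma cmod_mtrace_sq_le_card:
  assumes "finite I"
  shows "(cmod (mtrace I Z))\<^sup>2 \<le> card I * frob_sq I Z"
proof -
  have "(cmod (mtrace I Z))\<^sup>2 \<le> (\<Sum>l\<in>I. (cmod (Z l l))\<^sup>2) * card I"
    using cmod_sum_mult_sq_le[of "\<lambda>l. Z l l" "\<lambda>_. 1" I] by (simp add: mtrace_def)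
  also have "\<dots> \<le> frob_sq I Z * card I"
    unfolding frob_sq_def using assms
    by (intro mult_right_mono sum_mono member_le_sum) auto
  finally show ?thesis by (simp add: mult.commute)
qed

lemma frob_sq_rank2_orth:
  assumes orth: "(\<Sum>y\<in>I. S y * cnj (R y)) = 0"
  shows "frob_sq I (\<lambda>x y. P x * R y + Q x * S y)
    = (\<Sum>x\<in>I. (cmod (P x))\<^sup>2) * (\<Sum>y\<in>I. (cmod (R y))\<^sup>2) + (\<Sum>x\<in>I. (cmod (Q x))\<^sup>2) * (\<Sum>y\<in>I. (cmod (S y))\<^sup>2)"
proof -
  have orth': "(\<Sum>y\<in>I. R y * cnj (S y)) = 0"
    using arg_cong[OF orth, of cnj] by (simp add: mult.commute)
  have "complex_of_real (frob_sq I (\<lambda>x y. P x * R y + Q x * S y))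
      = (\<Sum>x\<in>I. \<Sum>y\<in>I. (P x * cnj (P x)) * (R y * cnj (R y)) + (Q x * cnj (Q x)) * (S y * cnj (S y))
          + (P x * cnj (Q x)) * (R y * cnj (S y)) + (Q x * cnj (P x)) * (S y * cnj (R y)))"
    by (simp add: frob_sq_def complex_norm_square algebra_simps del: of_real_power)
  also have "\<dots> = (\<Sum>x\<in>I. P x * cnj (P x)) * (\<Sum>y\<in>I. R y * cnj (R y))
      + (\<Sum>x\<in>I. Q x * cnj (Q x)) * (\<Sum>y\<in>I. S y * cnj (S y))
      + (\<Sum>x\<in>I. P x * cnj (Q x)) * (\<Sum>y\<in>I. R y * cnj (S y))
      + (\<Sum>x\<in>I. Q x * cnj (P x)) * (\<Sum>y\<in>I. S y * cnj (R y))"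
    by (simp add: sum.distrib sum_product)
  also have "\<dots> = complex_of_real ((\<Sum>x\<in>I. (cmod (P x))\<^sup>2) * (\<Sum>y\<in>I. (cmod (R y))\<^sup>2)
      + (\<Sum>x\<in>I. (cmod (Q x))\<^sup>2) * (\<Sum>y\<in>I. (cmod (S y))\<^sup>2))"
    by (simp add: orth orth' complex_norm_square del: of_real_power)
  finally show ?thesis
    using of_real_eq_iff by blast
qed

lemma trace_sq_le_rank2_orth:
  assumes orth: "(\<Sum>y\<in>I. S y * cnj (R y)) = 0"
  shows "(cmod (mtrace I (\<lambda>x y. P x * R y + Q x * S y)))\<^sup>2 \<le> 2 * frob_sq I (\<lambda>x y. P x * R y + Q x * S y)"
proof -
  have "(cmod (mtrace I (\<lambda>x y. P x * R y + Q x * S y)))\<^sup>2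
      = (cmod ((\<Sum>l\<in>I. P l * R l) + (\<Sum>l\<in>I. Q l * S l)))\<^sup>2"
    by (simp add: mtrace_def sum.distrib)
  also have "\<dots> \<le> 2 * (cmod (\<Sum>l\<in>I. P l * R l))\<^sup>2 + 2 * (cmod (\<Sum>l\<in>I. Q l * S l))\<^sup>2"
    by (rule cmod_add_sq_le)
  also have "\<dots> \<le> 2 * frob_sq I (\<lambda>x y. P x * R y + Q x * S y)"
    using cmod_sum_mult_sq_le[of P R I] cmod_sum_mult_sq_le[of Q S I]
    by (simp add: frob_sq_rank2_orth[OF orth])
  finally show ?thesis .
qed

text \<open>Gram--Schmidt on the right factors: replacing \<open>S\<close> by its component orthogonal to \<open>R\<close>.\<close>
lemma rank_le_2_orth:
  assumes "finite I" and "rank_le_2 Z"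
  obtains P R Q S where "(\<Sum>y\<in>I. S y * cnj (R y)) = 0" and "\<And>x y. Z x y = P x * R y + Q x * S y"
proof -
  obtain P R Q S0 where Z: "\<And>x y. Z x y = P x * R y + Q x * S0 y"
    using assms(2) unfolding rank_le_2_def by blast
  define \<gamma> where "\<gamma> = (\<Sum>y\<in>I. S0 y * cnj (R y)) / (\<Sum>y\<in>I. R y * cnj (R y))"
  define S where "S y = S0 y - \<gamma> * R y" for y
  have "(\<Sum>y\<in>I. S y * cnj (R y)) = 0"
  proof (cases "\<forall>y\<in>I. R y = 0")
    case True
    then show ?thesis by simp
  next
    case False
    have "(\<Sum>y\<in>I. R y * cnj (R y)) = complex_of_real (\<Sum>y\<in>I. (cmod (R y))\<^sup>2)"
      by (simp only: of_real_sum complex_norm_square)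
    moreover have "(\<Sum>y\<in>I. (cmod (R y))\<^sup>2) \<noteq> 0"
      using False assms(1) by (simp add: sum_nonneg_eq_0_iff)
    ultimately have "(\<Sum>y\<in>I. R y * cnj (R y)) \<noteq> 0"
      by (metis of_real_eq_0_iff)
    moreover have "(\<Sum>y\<in>I. S y * cnj (R y)) = (\<Sum>y\<in>I. S0 y * cnj (R y)) - \<gamma> * (\<Sum>y\<in>I. R y * cnj (R y))"
      by (simp add: S_def left_diff_distrib sum_subtractf sum_distrib_left mult.assoc)
    ultimately show ?thesis
      by (simp add: \<gamma>_def)
  qed
  moreover have "Z x y = (P x + \<gamma> * Q x) * R y + Q x * S y" for x y
    by (simp add: Z S_def algebra_simps)
  ultimately show ?thesis
    by (rule that)
qed

lemma trace_sq_le_rank_le_2: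
  assumes "finite I" and "rank_le_2 Z"
  shows "(cmod (mtrace I Z))\<^sup>2 \<le> 2 * frob_sq I Z"
proof -
  obtain P R Q S where orth: "(\<Sum>y\<in>I. S y * cnj (R y)) = 0" and Z: "\<And>x y. Z x y = P x * R y + Q x * S y"
    using rank_le_2_orth[OF assms] by metis
  have "Z = (\<lambda>x y. P x * R y + Q x * S y)"
    by (simp add: Z fun_eq_iff)
  then show ?thesis
    using trace_sq_le_rank2_orth[OF orth] by simp
qed

lemma trace_gap_nonneg: "finite I \<Longrightarrow> rank_le_2 Z \<Longrightarrow> 0 \<le> trace_gap I Z"
  using trace_sq_le_rank_le_2[of I Z] by (simp add: trace_gap_def)

lemma lagrange_identity_cmod:
  fixes z :: "nat \<Rightarrow> complex"
  shows "real n * (\<Sum>i<n. (cmod (z i))\<^sup>2) - (cmod (\<Sum>i<n. z i))\<^sup>2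
     = (\<Sum>i<n. \<Sum>j<n. (cmod (z i - z j))\<^sup>2) / 2"
proof -
  have "(\<Sum>i<n. \<Sum>j<n. (z i - z j) * cnj (z i - z j))
      = (\<Sum>i<n. \<Sum>j<n. z i * cnj (z i)) + (\<Sum>i<n. \<Sum>j<n. z j * cnj (z j))
        - (\<Sum>i<n. \<Sum>j<n. z i * cnj (z j)) - (\<Sum>i<n. \<Sum>j<n. z j * cnj (z i))"
    by (simp add: algebra_simps sum.distrib sum_subtractf)
  also have "\<dots> = 2 * (of_nat n * (\<Sum>i<n. z i * cnj (z i)) - (\<Sum>i<n. z i) * (\<Sum>j<n. cnj (z j)))"
    by (simp add: sum_product sum.swap[of "\<lambda>i j. z j * cnj (z i)"] algebra_simps sum_distrib_left)
  finally have "complex_of_real (real n * (\<Sum>i<n. (cmod (z i))\<^sup>2) - (cmod (\<Sum>i<n. z i))\<^sup>2)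
      = complex_of_real ((\<Sum>i<n. \<Sum>j<n. (cmod (z i - z j))\<^sup>2) / 2)"
    by (simp add: of_real_sum complex_norm_square del: of_real_power)
  then show ?thesis
    using of_real_eq_iff by blast
qed

lemma polarization_cmod:
  "(cmod m)\<^sup>2 + (cmod x)\<^sup>2 + (cmod y)\<^sup>2 = ((cmod (m - x + y))\<^sup>2 + (cmod (m + x - y))\<^sup>2
     + (cmod (m - \<i> * x - \<i> * y))\<^sup>2 + (cmod (m + \<i> * x + \<i> * y))\<^sup>2) / 4"
proof -
  have "complex_of_real ((cmod m)\<^sup>2 + (cmod x)\<^sup>2 + (cmod y)\<^sup>2)
      = complex_of_real (((cmod (m - x + y))\<^sup>2 + (cmod (m + x - y))\<^sup>2
          + (cmod (m - \<i> * x - \<i> * y))\<^sup>2 + (cmod (m + \<i> * x + \<i> * y))\<^sup>2) / 4)"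
    by (simp add: complex_norm_square algebra_simps del: of_real_power)
  then show ?thesis
    using of_real_eq_iff by blast
qed

lemma frob_sq_lagrange:
  "real n * (\<Sum>i<n. frob_sq I (Z i)) - frob_sq I (\<lambda>x y. \<Sum>i<n. Z i x y)
     = (\<Sum>i<n. \<Sum>j<n. frob_sq I (\<lambda>x y. Z i x y - Z j x y)) / 2"
proof -
  have "real n * (\<Sum>i<n. frob_sq I (Z i)) - frob_sq I (\<lambda>x y. \<Sum>i<n. Z i x y)
      = (\<Sum>x\<in>I. \<Sum>y\<in>I. real n * (\<Sum>i<n. (cmod (Z i x y))\<^sup>2) - (cmod (\<Sum>i<n. Z i x y))\<^sup>2)"
  proof -
    have "(\<Sum>i<n. frob_sq I (Z i)) = (\<Sum>x\<in>I. \<Sum>y\<in>I. \<Sum>i<n. (cmod (Z i x y))\<^sup>2)"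
      unfolding frob_sq_def by (rule sum_swap3)
    then show ?thesis
      by (simp add: frob_sq_def sum_subtractf sum_distrib_left)
  qed
  also have "\<dots> = (\<Sum>x\<in>I. \<Sum>y\<in>I. \<Sum>i<n. \<Sum>j<n. (cmod (Z i x y - Z j x y))\<^sup>2) / 2"
    by (simp add: lagrange_identity_cmod sum_divide_distrib)
  also have "\<dots> = (\<Sum>i<n. \<Sum>j<n. frob_sq I (\<lambda>x y. Z i x y - Z j x y)) / 2"
    unfolding frob_sq_def by (simp only: sum_swap_pairs[where A = I and B = I])
  finally show ?thesis .
qed

lemma trace_gap_lagrange:
  "real n * (\<Sum>i<n. trace_gap I (Z i)) - trace_gap I (\<lambda>x y. \<Sum>i<n. Z i x y)
     = (\<Sum>i<n. \<Sum>j<n. trace_gap I (\<lambda>x y. Z i x y - Z j x y)) / 2"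
proof -
  have "mtrace I (\<lambda>x y. \<Sum>i<n. Z i x y) = (\<Sum>i<n. mtrace I (Z i))"
    unfolding mtrace_def by (rule sum.swap)
  then have sum: "trace_gap I (\<lambda>x y. \<Sum>i<n. Z i x y)
      = frob_sq I (\<lambda>x y. \<Sum>i<n. Z i x y) - (cmod (\<Sum>i<n. mtrace I (Z i)))\<^sup>2 / 2"
    by (simp add: trace_gap_def)
  have "mtrace I (\<lambda>x y. Z i x y - Z j x y) = mtrace I (Z i) - mtrace I (Z j)" for i j
    unfolding mtrace_def by (rule sum_subtractf)
  then have diff: "(\<Sum>i<n. \<Sum>j<n. trace_gap I (\<lambda>x y. Z i x y - Z j x y))
      = (\<Sum>i<n. \<Sum>j<n. frob_sq I (\<lambda>x y. Z i x y - Z j x y))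
        - (\<Sum>i<n. \<Sum>j<n. (cmod (mtrace I (Z i) - mtrace I (Z j)))\<^sup>2) / 2"
    by (simp add: trace_gap_def sum_subtractf sum_divide_distrib)
  have "real n * (\<Sum>i<n. trace_gap I (Z i))
      = real n * (\<Sum>i<n. frob_sq I (Z i)) - real n * (\<Sum>i<n. (cmod (mtrace I (Z i)))\<^sup>2) / 2"
    by (simp add: trace_gap_def sum_subtractf right_diff_distrib flip: sum_divide_distrib)
  then show ?thesis
    using sum diff frob_sq_lagrange[of n I Z] lagrange_identity_cmod[of n "\<lambda>i. mtrace I (Z i)"]
    by linarith
qed

lemma trace_gap_polarization:
  "trace_gap I M + trace_gap I X + trace_gap I Y
   = (trace_gap I (\<lambda>a b. M a b - X a b + Y a b) + trace_gap I (\<lambda>a b. M a b + X a b - Y a b)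
      + trace_gap I (\<lambda>a b. M a b - \<i> * X a b - \<i> * Y a b)
      + trace_gap I (\<lambda>a b. M a b + \<i> * X a b + \<i> * Y a b)) / 4"
proof -
  have frob: "frob_sq I M + frob_sq I X + frob_sq I Y
     = (frob_sq I (\<lambda>a b. M a b - X a b + Y a b) + frob_sq I (\<lambda>a b. M a b + X a b - Y a b)
        + frob_sq I (\<lambda>a b. M a b - \<i> * X a b - \<i> * Y a b)
        + frob_sq I (\<lambda>a b. M a b + \<i> * X a b + \<i> * Y a b)) / 4"
  proof -
    have "frob_sq I M + frob_sq I X + frob_sq I Y
        = (\<Sum>x\<in>I. \<Sum>y\<in>I. (cmod (M x y))\<^sup>2 + (cmod (X x y))\<^sup>2 + (cmod (Y x y))\<^sup>2)"
      by (simp add: frob_sq_def sum.distrib)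
    also have "\<dots> = (\<Sum>x\<in>I. \<Sum>y\<in>I. ((cmod (M x y - X x y + Y x y))\<^sup>2 + (cmod (M x y + X x y - Y x y))\<^sup>2
        + (cmod (M x y - \<i> * X x y - \<i> * Y x y))\<^sup>2 + (cmod (M x y + \<i> * X x y + \<i> * Y x y))\<^sup>2) / 4)"
      by (intro sum.cong refl polarization_cmod)
    finally show ?thesis
      by (simp only: frob_sq_def sum.distrib sum_divide_distrib add_divide_distrib)
  qed
  have trace: "(cmod (mtrace I M))\<^sup>2 + (cmod (mtrace I X))\<^sup>2 + (cmod (mtrace I Y))\<^sup>2
     = ((cmod (mtrace I (\<lambda>a b. M a b - X a b + Y a b)))\<^sup>2
        + (cmod (mtrace I (\<lambda>a b. M a b + X a b - Y a b)))\<^sup>2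
        + (cmod (mtrace I (\<lambda>a b. M a b - \<i> * X a b - \<i> * Y a b)))\<^sup>2
        + (cmod (mtrace I (\<lambda>a b. M a b + \<i> * X a b + \<i> * Y a b)))\<^sup>2) / 4"
    unfolding mtrace_def
    by (simp add: polarization_cmod[of "sum _ _"] sum.distrib sum_subtractf sum_distrib_left)
  show ?thesis
    unfolding trace_gap_def using frob trace by (simp add: field_simps)
qed

lemma offdiag_defect_bound:
  fixes E G :: "nat \<Rightarrow> nat \<Rightarrow> real"
  assumes pair: "\<And>i j. 0 \<le> E i j + G i j + G j i" and diag: "\<And>i. E i i = 0"
    and nonneg: "\<And>i j. 0 \<le> G i j"
  shows "real n * (\<Sum>i<n. G i i) - (\<Sum>i<n. \<Sum>j<n. E i j) / 2 \<le> real n * (\<Sum>i<n. \<Sum>j<n. G i j)"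
proof -
  define Off where "Off i j = (if i = j then 0 else G i j)" for i j
  have "- E i j \<le> Off i j + Off j i" for i j
    using pair[of i j] diag[of i] by (cases "i = j") (auto simp: Off_def)
  then have "- (\<Sum>i<n. \<Sum>j<n. E i j) \<le> (\<Sum>i<n. \<Sum>j<n. Off i j + Off j i)"
    by (simp add: sum_negf[symmetric] sum_mono)
  also have "\<dots> = 2 * (\<Sum>i<n. \<Sum>j<n. Off i j)"
    by (simp add: sum.distrib sum.swap[of "\<lambda>i j. Off j i"])
  finally have off: "- (\<Sum>i<n. \<Sum>j<n. E i j) \<le> 2 * (\<Sum>i<n. \<Sum>j<n. Off i j)" .
  have "(\<Sum>j<n. G i j) = (\<Sum>j<n. Off i j) + G i i" if "i < n" for i
  proof -
    have "(\<Sum>j<n. G i j) = (\<Sum>j<n. Off i j + (if i = j then G i j else 0))"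
      by (rule sum.cong) (auto simp: Off_def)
    with that show ?thesis
      by (simp add: sum.distrib)
  qed
  then have split: "(\<Sum>i<n. \<Sum>j<n. G i j) = (\<Sum>i<n. \<Sum>j<n. Off i j) + (\<Sum>i<n. G i i)"
    by (simp add: sum.distrib)
  have "(\<Sum>i<n. G i i) \<le> (\<Sum>i<n. \<Sum>j<n. G i j)"
    by (intro sum_mono member_le_sum) (auto simp: nonneg)
  then have "(real n - 1) * (\<Sum>i<n. G i i) \<le> (real n - 1) * (\<Sum>i<n. \<Sum>j<n. G i j)"
    by (cases "n = 0") (auto intro: mult_left_mono)
  with off split show ?thesis
    by (simp add: algebra_simps)
qed

section \<open>The quadratic form of the partial transpose\<close>

definition sqnorm :: "nat \<Rightarrow> vec4 \<Rightarrow> real" where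
  "sqnorm d \<psi> = (\<Sum>x\<in>Idx d. (cmod (\<psi> x))\<^sup>2)"

text \<open>With \<open>\<Phi> = \<Sum>\<^sub>k |kk\<rangle>\<close>, \<open>contract12 d \<psi>\<close> is \<open>(\<langle>\<Phi>| \<otimes> 1) \<psi>\<close> read as a matrix on
  \<open>H\<^sub>3 \<otimes> H\<^sub>4\<close>, and \<open>contract34 d \<psi>\<close> is \<open>(1 \<otimes> \<langle>\<Phi>|) \<psi>\<close> read as a matrix on \<open>H\<^sub>1 \<otimes> H\<^sub>2\<close>.\<close>

definition contract12 :: "nat \<Rightarrow> vec4 \<Rightarrow> nat mat" where
  "contract12 d \<psi> x3 x4 = (\<Sum>k<d. \<psi> (k, k, x3, x4))"

definition contract34 :: "nat \<Rightarrow> vec4 \<Rightarrow> nat mat" where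
  "contract34 d \<psi> x1 x2 = (\<Sum>l<d. \<psi> (x1, x2, l, l))"

text \<open>The partial transpose of the swap, \<open>|\<Phi>\<rangle>\<langle>\<Phi>|\<close>.\<close>
definition omega2 :: op2 where
  "omega2 = (\<lambda>(i, j) (k, l). kd i j * kd k l)"

lemma sum_Idx: "(\<Sum>x\<in>Idx d. f x) = (\<Sum>x1<d. \<Sum>x2<d. \<Sum>x3<d. \<Sum>x4<d. f (x1, x2, x3, x4))"
  unfolding Idx_def by (simp add: sum.cartesian_product)

lemma qform_expand:
  "qform d M \<psi> = (\<Sum>x1<d. \<Sum>x2<d. \<Sum>x3<d. \<Sum>x4<d. cnj (\<psi> (x1, x2, x3, x4)) *
     (\<Sum>y1<d. \<Sum>y2<d. \<Sum>y3<d. \<Sum>y4<d. M (x1, x2, x3, x4) (y1, y2, y3, y4) * \<psi> (y1, y2, y3, y4)))"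
  by (simp add: qform_def sum_Idx sum_distrib_left mult.assoc)

lemma qform_lincomb:
  "qform d (\<lambda>x y. A x y + c * (B x y + C x y) + c' * D x y) \<psi>
   = qform d A \<psi> + c * (qform d B \<psi> + qform d C \<psi>) + c' * qform d D \<psi>"
  by (simp add: qform_def algebra_simps sum.distrib sum_distrib_left)

lemma sum_kd_mult [simp]: "(\<Sum>y<d. kd x y * f y) = (if x < d then f x else 0)"
  by (simp add: kd_def if_distrib[of "\<lambda>c. c * _"] cong: if_cong)

lemmas qform_tens_simps = qform_expand tens_def id2_def omega2_def mult.assoc
  mult.left_commute[of "cnj _"] of_real_cmod_sq cnj_sum
  sum_distrib_left[symmetric] sum_distrib_right[symmetric]

lemma qform_tens_id2_id2: "qform d (tens id2 id2) \<psi> = complex_of_real (sqnorm d \<psi>)"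
  by (simp add: qform_tens_simps sqnorm_def sum_Idx cong: if_cong)

lemma qform_tens_id2_omega2:
  "qform d (tens id2 omega2) \<psi> = complex_of_real (frob_sq {..<d} (contract34 d \<psi>))"
  by (simp add: qform_tens_simps frob_sq_def contract34_def cong: if_cong)

lemma qform_tens_omega2_id2:
  "qform d (tens omega2 id2) \<psi> = complex_of_real (frob_sq {..<d} (contract12 d \<psi>))"
proof -
  have "qform d (tens omega2 id2) \<psi>
      = (\<Sum>k<d. \<Sum>x3<d. \<Sum>x4<d. cnj (\<psi> (k, k, x3, x4)) * contract12 d \<psi> x3 x4)"
    by (simp add: qform_tens_simps contract12_def cong: if_cong)
  also have "\<dots> = (\<Sum>x3<d. \<Sum>x4<d. \<Sum>k<d. cnj (\<psi> (k, k, x3, x4)) * contract12 d \<psi> x3 x4)"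
    by (rule sum_swap3)
  finally show ?thesis
    by (simp add: frob_sq_def contract12_def of_real_cmod_sq sum_distrib_right[symmetric])
qed

lemma qform_tens_omega2_omega2:
  "qform d (tens omega2 omega2) \<psi> = complex_of_real ((cmod (mtrace {..<d} (contract34 d \<psi>)))\<^sup>2)"
  by (simp add: qform_tens_simps mtrace_def contract34_def cong: if_cong)

lemma ptB_rho:
  "ptB (rho d \<epsilon> \<delta>) = (\<lambda>x y. tens id2 id2 x y
     + complex_of_real ((\<epsilon> * real d - 1) / real d) * (tens id2 omega2 x y + tens omega2 id2 x y)
     + complex_of_real ((1 - 2 * \<epsilon> * real d + \<delta> * (real d)\<^sup>2) / (real d)\<^sup>2) * tens omega2 omega2 x y)"
  by (auto simp: fun_eq_iff ptB_def rho_def tens_def id2_def swap2_def omega2_def kd_def)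

lemma qform_ptB_rho:
  "qform d (ptB (rho d \<epsilon> \<delta>)) \<psi> = complex_of_real (sqnorm d \<psi>
     + (\<epsilon> * real d - 1) / real d * (frob_sq {..<d} (contract12 d \<psi>) + frob_sq {..<d} (contract34 d \<psi>))
     + (1 - 2 * \<epsilon> * real d + \<delta> * (real d)\<^sup>2) / (real d)\<^sup>2 * (cmod (mtrace {..<d} (contract34 d \<psi>)))\<^sup>2)"
  by (simp only: ptB_rho qform_lincomb qform_tens_id2_id2 qform_tens_id2_omega2 qform_tens_omega2_id2
      qform_tens_omega2_omega2) simp

lemma sqnorm_slices34: "sqnorm d \<psi> = (\<Sum>i<d. \<Sum>j<d. frob_sq {..<d} (\<lambda>x y. \<psi> (i, j, x, y)))"
  by (simp add: sqnorm_def sum_Idx frob_sq_def)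

lemma sqnorm_slices12: "sqnorm d \<psi> = (\<Sum>k<d. \<Sum>l<d. frob_sq {..<d} (\<lambda>x y. \<psi> (x, y, k, l)))"
  unfolding sqnorm_slices34 frob_sq_def by (rule sum_swap_pairs)

lemma frob_sq_contract34:
  "frob_sq {..<d} (contract34 d \<psi>) = (\<Sum>i<d. \<Sum>j<d. (cmod (mtrace {..<d} (\<lambda>x y. \<psi> (i, j, x, y))))\<^sup>2)"
  by (simp add: frob_sq_def mtrace_def contract34_def)

lemma mtrace_contract12: "mtrace {..<d} (contract12 d \<psi>) = mtrace {..<d} (contract34 d \<psi>)"
  unfolding mtrace_def contract12_def contract34_def by (rule sum.swap)

lemma mtrace_contract_sq_le_dim:
  "(cmod (mtrace {..<d} (contract34 d \<psi>)))\<^sup>2 \<le> real d * frob_sq {..<d} (contract12 d \<psi>)"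
  "(cmod (mtrace {..<d} (contract34 d \<psi>)))\<^sup>2 \<le> real d * frob_sq {..<d} (contract34 d \<psi>)"
  using cmod_mtrace_sq_le_card[of "{..<d}" "contract12 d \<psi>"]
    cmod_mtrace_sq_le_card[of "{..<d}" "contract34 d \<psi>"]
  by (simp_all add: mtrace_contract12)

lemma qform_cong: "(\<And>x. x \<in> Idx d \<Longrightarrow> \<psi> x = \<phi> x) \<Longrightarrow> qform d M \<psi> = qform d M \<phi>"
  unfolding qform_def by (intro sum.cong) auto

section \<open>The final estimate\<close>

lemma min_mult_le:
  fixes e x k S :: real
  assumes "0 \<le> x" and "x \<le> k * S" and "0 \<le> k"
  shows "min (k * e) 0 * S \<le> e * x"
proof (cases "0 \<le> e")
  case True
  with assms show ?thesis
    by simp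
next
  case False
  then have "e * (k * S) \<le> e * x"
    using assms(2) by (simp add: mult_left_mono_neg)
  with False assms(3) show ?thesis
    by (simp add: min_def mult_nonneg_nonpos)
qed

text \<open>\<open>S, N1, N3, t\<close> stand for \<open>sqnorm d \<psi>\<close>, the squared norms of \<open>contract12 d \<psi>\<close> and
  \<open>contract34 d \<psi>\<close>, and \<open>|T|\<^sup>2\<close>; \<open>D = real d\<close>.\<close>

lemma ptB_value_nonneg_1:
  fixes D S N1 N3 t e f :: real
  assumes "2 \<le> D" and "0 \<le> t" and N1: "N1 \<le> 2 * S" and "N3 \<le> 2 * S" and "t \<le> 2 * S"
    and "t \<le> D * N1" and "t \<le> D * N3" and key: "D * N3 + 2 * N1 \<le> 2 * D * S + t"
    and cond: "(1 - 2 / D)\<^sup>2 + min (4 * e) 0 + min (2 * f) 0 \<ge> 0"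
  shows "0 \<le> S + (e * D - 1) / D * (N1 + N3) + (1 - 2 * e * D + f * D\<^sup>2) / D\<^sup>2 * t"
    (is "0 \<le> ?value")
proof -
  have "0 < D" and "0 \<le> S"
    using assms by linarith+
  then have "t / D \<le> N1" and "t / D \<le> N3" and "0 \<le> t / D"
    using assms by (simp_all add: divide_le_eq mult.commute)
  then have E: "min (4 * e) 0 * S \<le> e * (N1 + N3 - 2 * t / D)"
    by (intro min_mult_le) (use assms in linarith)+
  have F: "min (2 * f) 0 * S \<le> f * t"
    using assms by (intro min_mult_le) auto
  have expand: "D\<^sup>2 * ?value = (D - 2)\<^sup>2 * S + (D - 2) * (2 * S - N1) + (2 * D * S + t - D * N3 - 2 * N1)
      + D\<^sup>2 * (e * (N1 + N3 - 2 * t / D) + f * t)"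
    using \<open>0 < D\<close> by (simp add: field_simps power2_eq_square)
  have "0 \<le> D\<^sup>2 * ((1 - 2 / D)\<^sup>2 + min (4 * e) 0 + min (2 * f) 0) * S"
    using cond \<open>0 \<le> S\<close> by simp
  also have "\<dots> = (D - 2)\<^sup>2 * S + D\<^sup>2 * (min (4 * e) 0 * S + min (2 * f) 0 * S)"
    using \<open>0 < D\<close> by (simp add: field_simps power2_eq_square)
  also have "\<dots> \<le> D\<^sup>2 * ?value"
    unfolding expand using E F N1 key \<open>2 \<le> D\<close> by (intro add_mono mult_left_mono mult_nonneg_nonneg) auto
  finally show ?thesis
    using \<open>0 < D\<close> by (simp add: zero_le_mult_iff)
qed

lemma ptB_value_nonneg_2:
  fixes D S N1 N3 t e f :: real
  assumes "2 \<le> D" and "0 \<le> t" and "N1 \<le> 2 * S" and "N3 \<le> 2 * S" and "t \<le> 2 * S"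
    and "t \<le> D * N1" and "t \<le> D * N3"
    and cond: "D\<^sup>2 + min (4 * D * (e * D - 1)) 0 + min (2 * (f * D\<^sup>2 - 1)) 0 \<ge> 0"
  shows "0 \<le> S + (e * D - 1) / D * (N1 + N3) + (1 - 2 * e * D + f * D\<^sup>2) / D\<^sup>2 * t"
    (is "0 \<le> ?value")
proof -
  define a c where "a = (e * D - 1) / D" and "c = (f * D\<^sup>2 - 1) / D\<^sup>2"
  have "0 < D" and "0 \<le> S"
    using assms by linarith+
  then have "t / D \<le> N1" and "t / D \<le> N3" and "0 \<le> t / D"
    using assms by (simp_all add: divide_le_eq mult.commute)
  then have A1: "min (2 * a) 0 * S \<le> a * (N1 - t / D)" and A3: "min (2 * a) 0 * S \<le> a * (N3 - t / D)"
    by (intro min_mult_le; use assms in linarith)+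
  have C: "min (2 * c) 0 * S \<le> c * t"
    using assms by (intro min_mult_le) auto
  have "min (4 * D * (e * D - 1)) 0 = D\<^sup>2 * (2 * min (2 * a) 0)"
    and "min (2 * (f * D\<^sup>2 - 1)) 0 = D\<^sup>2 * min (2 * c) 0"
    using \<open>0 < D\<close> by (auto simp: a_def c_def min_def field_simps power2_eq_square)
  with cond have "0 \<le> D\<^sup>2 * (1 + 2 * min (2 * a) 0 + min (2 * c) 0)"
    by (simp add: algebra_simps)
  with \<open>0 < D\<close> have "0 \<le> 1 + 2 * min (2 * a) 0 + min (2 * c) 0"
    by (simp add: zero_le_mult_iff)
  with \<open>0 \<le> S\<close> have "0 \<le> (1 + 2 * min (2 * a) 0 + min (2 * c) 0) * S"
    by simp
  also have "\<dots> = S + 2 * (min (2 * a) 0 * S) + min (2 * c) 0 * S"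
    by (simp add: algebra_simps)
  also have "\<dots> \<le> S + a * (N1 - t / D) + a * (N3 - t / D) + c * t"
    using A1 A3 C by linarith
  also have "\<dots> = ?value"
    using \<open>0 < D\<close> by (simp add: a_def c_def field_simps power2_eq_square)
  finally show ?thesis .
qed

section \<open>Vectors of Schmidt rank at most two\<close>

lemma schmidt_decomp_exists:
  "\<exists>a b :: nat \<Rightarrow> nat \<times> nat \<Rightarrow> complex. \<forall>(x1, x2, x3, x4)\<in>Idx d.
     \<psi> (x1, x2, x3, x4) = (\<Sum>k<d * d. a k (x1, x3) * b k (x2, x4))"
proof -
  have "\<psi> (x1, x2, x3, x4)
      = (\<Sum>k<d * d. (if k = x1 * d + x3 then 1 else 0) * \<psi> (k div d, x2, k mod d, x4))"
    if "x1 < d" and "x3 < d" for x1 x2 x3 x4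
  proof -
    have "x1 * d + x3 < (x1 + 1) * d"
      using that by simp
    also have "\<dots> \<le> d * d"
      using that by (intro mult_le_mono1) simp
    finally show ?thesis
      using that by (simp add: if_distrib[of "\<lambda>c. c * _"] cong: if_cong)
  qed
  then show ?thesis
    by (intro exI[of _ "\<lambda>k (x1, x3). if k = x1 * d + x3 then 1 else 0"]
        exI[of _ "\<lambda>k (x2, x4). \<psi> (k div d, x2, k mod d, x4)"]) (auto simp: Idx_def)
qed

lemma schmidt_rank_le_2_decomp:
  assumes "schmidt_rank d \<psi> \<le> 2"
  obtains a0 b0 a1 b1 :: "nat \<times> nat \<Rightarrow> complex" where "\<And>x1 x2 x3 x4. (x1, x2, x3, x4) \<in> Idx d \<Longrightarrow>
    \<psi> (x1, x2, x3, x4) = a0 (x1, x3) * b0 (x2, x4) + a1 (x1, x3) * b1 (x2, x4)"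
proof -
  let ?decomp = "\<lambda>r. \<exists>a b :: nat \<Rightarrow> nat \<times> nat \<Rightarrow> complex. \<forall>(x1, x2, x3, x4)\<in>Idx d.
      \<psi> (x1, x2, x3, x4) = (\<Sum>k<r. a k (x1, x3) * b k (x2, x4))"
  have "?decomp (LEAST r. ?decomp r)"
    by (rule LeastI_ex) (use schmidt_decomp_exists in blast)
  then obtain a b :: "nat \<Rightarrow> nat \<times> nat \<Rightarrow> complex" where ab: "\<forall>(x1, x2, x3, x4)\<in>Idx d.
      \<psi> (x1, x2, x3, x4) = (\<Sum>k<schmidt_rank d \<psi>. a k (x1, x3) * b k (x2, x4))"
    unfolding schmidt_rank_def by blast
  define a' where "a' k = (if k < schmidt_rank d \<psi> then a k else (\<lambda>_. 0))" for k
  have "schmidt_rank d \<psi> \<in> {0, 1, 2}"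
    using assms by auto
  then show ?thesis
    using ab by (intro that[of "a' 0" "b 0" "a' 1" "b 1"]) (auto simp: a'_def numeral_2_eq_2)
qed

locale schmidt_decomp2 =
  fixes \<psi> :: vec4 and a0 b0 a1 b1 :: "nat \<times> nat \<Rightarrow> complex"
  assumes decomp:
    "\<And>x1 x2 x3 x4. \<psi> (x1, x2, x3, x4) = a0 (x1, x3) * b0 (x2, x4) + a1 (x1, x3) * b1 (x2, x4)"
begin

lemma rank_le_2_bipartite: "rank_le_2 (\<lambda>p q. \<psi> (fst p, fst q, snd p, snd q))"
  unfolding rank_le_2_def
  by (intro exI[of _ a0] exI[of _ b0] exI[of _ a1] exI[of _ b1]) (simp add: decomp)

lemma rank_le_2_slice12: "rank_le_2 (\<lambda>x y. \<psi> (x, y, k, l))"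
  unfolding rank_le_2_def
  by (intro exI[of _ "\<lambda>x. a0 (x, k)"] exI[of _ "\<lambda>y. b0 (y, l)"] exI[of _ "\<lambda>x. a1 (x, k)"]
      exI[of _ "\<lambda>y. b1 (y, l)"]) (simp add: decomp)

text \<open>Contracting \<open>H\<^sub>1 \<otimes> H\<^sub>2\<close> with the product vector \<open>(\<alpha> e\<^sub>i + \<beta> e\<^sub>j) \<otimes> (\<gamma> e\<^sub>i + \<delta> e\<^sub>j)\<close>.\<close>
lemma rank_le_2_slice34_comb:
  assumes "\<And>x y. Z x y = \<alpha> * \<gamma> * \<psi> (i, i, x, y) + \<alpha> * \<delta> * \<psi> (i, j, x, y)
      + \<beta> * \<gamma> * \<psi> (j, i, x, y) + \<beta> * \<delta> * \<psi> (j, j, x, y)"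
  shows "rank_le_2 Z"
  unfolding rank_le_2_def
  by (intro exI[of _ "\<lambda>x. \<alpha> * a0 (i, x) + \<beta> * a0 (j, x)"] exI[of _ "\<lambda>y. \<gamma> * b0 (i, y) + \<delta> * b0 (j, y)"]
      exI[of _ "\<lambda>x. \<alpha> * a1 (i, x) + \<beta> * a1 (j, x)"] exI[of _ "\<lambda>y. \<gamma> * b1 (i, y) + \<delta> * b1 (j, y)"])
    (simp add: assms decomp algebra_simps)

lemma rank_le_2_slice34: "rank_le_2 (\<lambda>x y. \<psi> (i, j, x, y))"
  by (rule rank_le_2_slice34_comb[where i = i and j = j and \<alpha> = 1 and \<beta> = 0 and \<gamma> = 0 and \<delta> = 1]) simp

lemma frob_sq_contract12_le: "frob_sq {..<d} (contract12 d \<psi>) \<le> 2 * sqnorm d \<psi>"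
proof -
  have "frob_sq {..<d} (contract12 d \<psi>)
      = (\<Sum>k<d. \<Sum>l<d. (cmod (mtrace {..<d} (\<lambda>x y. \<psi> (x, y, k, l))))\<^sup>2)"
    by (simp add: frob_sq_def mtrace_def contract12_def)
  also have "\<dots> \<le> (\<Sum>k<d. \<Sum>l<d. 2 * frob_sq {..<d} (\<lambda>x y. \<psi> (x, y, k, l)))"
    by (intro sum_mono trace_sq_le_rank_le_2 rank_le_2_slice12) simp
  finally show ?thesis
    by (simp add: sqnorm_slices12 sum_distrib_left)
qed

lemma frob_sq_contract34_le: "frob_sq {..<d} (contract34 d \<psi>) \<le> 2 * sqnorm d \<psi>"
proof -
  have "frob_sq {..<d} (contract34 d \<psi>) \<le> (\<Sum>i<d. \<Sum>j<d. 2 * frob_sq {..<d} (\<lambda>x y. \<psi> (i, j, x, y)))"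
    unfolding frob_sq_contract34 by (intro sum_mono trace_sq_le_rank_le_2 rank_le_2_slice34) simp
  then show ?thesis
    by (simp add: sqnorm_slices34 sum_distrib_left)
qed

lemma mtrace_contract34_sq_le: "(cmod (mtrace {..<d} (contract34 d \<psi>)))\<^sup>2 \<le> 2 * sqnorm d \<psi>"
proof -
  let ?I = "{..<d} \<times> {..<d}" and ?Z = "\<lambda>p q. \<psi> (fst p, fst q, snd p, snd q)"
  have trace: "mtrace ?I ?Z = mtrace {..<d} (contract34 d \<psi>)"
    by (simp add: mtrace_def contract34_def sum.cartesian_product case_prod_unfold)
  have "frob_sq ?I ?Z = (\<Sum>x1<d. \<Sum>x3<d. \<Sum>x2<d. \<Sum>x4<d. (cmod (\<psi> (x1, x2, x3, x4)))\<^sup>2)"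
    by (simp add: frob_sq_def sum.cartesian_product')
  also have "\<dots> = sqnorm d \<psi>"
    unfolding sqnorm_def sum_Idx by (intro sum.cong refl sum.swap)
  finally have "frob_sq ?I ?Z = sqnorm d \<psi>" .
  with trace show ?thesis
    using trace_sq_le_rank_le_2[OF _ rank_le_2_bipartite, of ?I] by simp
qed

lemma trace_gap_pair_nonneg:
  "0 \<le> trace_gap {..<d} (\<lambda>x y. \<psi> (i, i, x, y) - \<psi> (j, j, x, y))
     + trace_gap {..<d} (\<lambda>x y. \<psi> (i, j, x, y)) + trace_gap {..<d} (\<lambda>x y. \<psi> (j, i, x, y))"
proof -
  let ?M = "\<lambda>x y. \<psi> (i, i, x, y) - \<psi> (j, j, x, y)"
  let ?X = "\<lambda>x y. \<psi> (i, j, x, y)" and ?Y = "\<lambda>x y. \<psi> (j, i, x, y)"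
  have comb: "0 \<le> trace_gap {..<d} Z" if "\<And>x y. Z x y = \<psi> (i, i, x, y) + \<delta> * \<psi> (i, j, x, y)
      + \<beta> * \<psi> (j, i, x, y) + \<beta> * \<delta> * \<psi> (j, j, x, y)" for Z \<beta> \<delta>
    using that by (intro trace_gap_nonneg rank_le_2_slice34_comb[of Z 1 1 i \<delta> j \<beta>]) auto
  have "0 \<le> trace_gap {..<d} (\<lambda>x y. ?M x y - ?X x y + ?Y x y)"
    by (rule comb[where \<beta> = 1 and \<delta> = "- 1"]) simp
  moreover have "0 \<le> trace_gap {..<d} (\<lambda>x y. ?M x y + ?X x y - ?Y x y)"
    by (rule comb[where \<beta> = "- 1" and \<delta> = 1]) simp
  moreover have "0 \<le> trace_gap {..<d} (\<lambda>x y. ?M x y - \<i> * ?X x y - \<i> * ?Y x y)"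
    by (rule comb[where \<beta> = "- \<i>" and \<delta> = "- \<i>"]) simp
  moreover have "0 \<le> trace_gap {..<d} (\<lambda>x y. ?M x y + \<i> * ?X x y + \<i> * ?Y x y)"
    by (rule comb[where \<beta> = \<i> and \<delta> = \<i>]) simp
  ultimately show ?thesis
    by (subst trace_gap_polarization) simp
qed

lemma frob_sq_contract_bound:
  "real d * frob_sq {..<d} (contract34 d \<psi>) + 2 * frob_sq {..<d} (contract12 d \<psi>)
     \<le> 2 * real d * sqnorm d \<psi> + (cmod (mtrace {..<d} (contract34 d \<psi>)))\<^sup>2"
proof -
  let ?G = "\<lambda>i j. trace_gap {..<d} (\<lambda>x y. \<psi> (i, j, x, y))"
  let ?E = "\<lambda>i j. trace_gap {..<d} (\<lambda>x y. \<psi> (i, i, x, y) - \<psi> (j, j, x, y))"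
  have "real d * (\<Sum>i<d. ?G i i) - (\<Sum>i<d. \<Sum>j<d. ?E i j) / 2 \<le> real d * (\<Sum>i<d. \<Sum>j<d. ?G i j)"
  proof (rule offdiag_defect_bound)
    show "0 \<le> ?E i j + ?G i j + ?G j i" for i j
      by (rule trace_gap_pair_nonneg)
    show "?E i i = 0" for i
      by (simp add: trace_gap_def frob_sq_def mtrace_def)
    show "0 \<le> ?G i j" for i j
      by (simp add: trace_gap_nonneg rank_le_2_slice34)
  qed
  moreover have "real d * (\<Sum>i<d. ?G i i) - trace_gap {..<d} (contract12 d \<psi>) = (\<Sum>i<d. \<Sum>j<d. ?E i j) / 2"
    using trace_gap_lagrange[of d "{..<d}" "\<lambda>i x y. \<psi> (i, i, x, y)"]
    by (simp add: contract12_def[abs_def])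
  moreover have "trace_gap {..<d} (contract12 d \<psi>)
      = frob_sq {..<d} (contract12 d \<psi>) - (cmod (mtrace {..<d} (contract34 d \<psi>)))\<^sup>2 / 2"
    by (simp add: trace_gap_def mtrace_contract12)
  moreover have "(\<Sum>i<d. \<Sum>j<d. ?G i j) = sqnorm d \<psi> - frob_sq {..<d} (contract34 d \<psi>) / 2"
    by (simp add: trace_gap_def sqnorm_slices34 frob_sq_contract34 sum_subtractf sum_divide_distrib)
  ultimately show ?thesis
    by (simp add: algebra_simps)
qed

lemma qform_ptB_rho_nonneg:
  assumes "2 \<le> d"
    and "(1 - 2 / real d)^2 + min (4 * \<epsilon>) 0 + min (2 * \<delta>) 0 \<ge> 0
      \<or> (real d)^2 + min (4 * real d * (\<epsilon> * real d - 1)) 0 + min (2 * (\<delta> * (real d)^2 - 1)) 0 \<ge> 0"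
  shows "0 \<le> qform d (ptB (rho d \<epsilon> \<delta>)) \<psi>"
proof -
  have "0 \<le> sqnorm d \<psi>
     + (\<epsilon> * real d - 1) / real d * (frob_sq {..<d} (contract12 d \<psi>) + frob_sq {..<d} (contract34 d \<psi>))
     + (1 - 2 * \<epsilon> * real d + \<delta> * (real d)\<^sup>2) / (real d)\<^sup>2 * (cmod (mtrace {..<d} (contract34 d \<psi>)))\<^sup>2"
    using assms(2)
  proof
    assume "(1 - 2 / real d)^2 + min (4 * \<epsilon>) 0 + min (2 * \<delta>) 0 \<ge> 0"
    then show ?thesis
      using assms(1) by (intro ptB_value_nonneg_1 frob_sq_contract12_le frob_sq_contract34_le
          mtrace_contract34_sq_le mtrace_contract_sq_le_dim frob_sq_contract_bound) auto
  next
    assume "(real d)^2 + min (4 * real d * (\<epsilon> * real d - 1)) 0 + min (2 * (\<delta> * (real d)^2 - 1)) 0 \<ge> 0"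
    then show ?thesis
      using assms(1) by (intro ptB_value_nonneg_2 frob_sq_contract12_le frob_sq_contract34_le
          mtrace_contract34_sq_le mtrace_contract_sq_le_dim) auto
  qed
  then show ?thesis
    by (simp add: qform_ptB_rho less_eq_complex_def)
qed

end

theorem mainTheorem3:
  fixes d :: nat and \<epsilon> \<delta> :: real
  assumes "d \<ge> 2"
    and "psd d (rho d \<epsilon> \<delta>)"
    and "(1 - 2 / real d)^2 + min (4 * \<epsilon>) 0 + min (2 * \<delta>) 0 \<ge> 0
         \<or> (real d)^2 + min (4 * real d * (\<epsilon> * real d - 1)) 0 + min (2 * (\<delta> * (real d)^2 - 1)) 0 \<ge> 0"
  shows "one_undistillable d (rho d \<epsilon> \<delta>)"
  unfolding one_undistillable_def
proof (intro allI impI)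
  fix \<psi> :: vec4
  assume "schmidt_rank d \<psi> \<le> 2"
  then obtain a0 b0 a1 b1 where \<psi>_decomp: "\<And>x1 x2 x3 x4. (x1, x2, x3, x4) \<in> Idx d \<Longrightarrow>
      \<psi> (x1, x2, x3, x4) = a0 (x1, x3) * b0 (x2, x4) + a1 (x1, x3) * b1 (x2, x4)"
    by (rule schmidt_rank_le_2_decomp) blast
  define \<phi> :: vec4 where "\<phi> = (\<lambda>(x1, x2, x3, x4). a0 (x1, x3) * b0 (x2, x4) + a1 (x1, x3) * b1 (x2, x4))"
  interpret schmidt_decomp2 \<phi> a0 b0 a1 b1
    by unfold_locales (simp add: \<phi>_def)
  have "qform d (ptB (rho d \<epsilon> \<delta>)) \<psi> = qform d (ptB (rho d \<epsilon> \<delta>)) \<phi>"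
    by (rule qform_cong) (auto simp: \<phi>_def \<psi>_decomp)
  with assms(1,3) show "0 \<le> qform d (ptB (rho d \<epsilon> \<delta>)) \<psi>"
    by (simp add: qform_ptB_rho_nonneg)
qed

end
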